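(* For a dataset $V$ of size $n$, any real $p\in(0,+\infty)$ and any dimension $d\ge1$, the VC dimension of contrastive learning (on triplet queries) for the $\ell_p$-distance class in dimension $d$ is $\Omega(\min(n^2,nd))$.
   Context: $V$ is a finite set with $|V|=n$. A query is a triple $(x,y,z)$ of elements of $V$; a labeling assigns it either $(x,y^+,z^-)$ (requiring $\rho(x,y)<\rho(x,z)$) or $(x,z^+,y^-)$ (requiring $\rho(x,y)>\rho(x,z)$). The $\ell_p$-distance class in dimension $d$ consists of all $\rho(x,y)=\|f(x)-f(y)\|_p$, $f:V\to\mathbb R^d$, where $\|v\|_p=(\sum_i|v_i|^p)^{1/p}$. A set $S$ of queries is shattered if for every labeling of $S$ there is a distance in the class satisfying all labeled queries; the VC dimension is the maximum size of a shattered set. *)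

theory Defs
  imports Complex_Main
begin

definition lp_dist :: "real \<Rightarrow> nat \<Rightarrow> ('a \<Rightarrow> nat \<Rightarrow> real) \<Rightarrow> 'a \<Rightarrow> 'a \<Rightarrow> real" where
  "lp_dist p d f x y = (\<Sum>i<d. \<bar>f x i - f y i\<bar> powr p) powr (1 / p)"

text \<open>A labeling of a query (x,y,z) is a boolean: True means (x, y+, z-),
  i.e. rho(x,y) < rho(x,z); False means (x, z+, y-), i.e. rho(x,y) > rho(x,z).\<close>
definition satisfies_label :: "('a \<Rightarrow> 'a \<Rightarrow> real) \<Rightarrow> 'a \<times> 'a \<times> 'a \<Rightarrow> bool \<Rightarrow> bool" where
  "satisfies_label \<rho> q b = (case q of (x, y, z) \<Rightarrow>
     (if b then \<rho> x y < \<rho> x z else \<rho> x y > \<rho> x z))"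

definition lp_shattered :: "real \<Rightarrow> nat \<Rightarrow> 'a set \<Rightarrow> ('a \<times> 'a \<times> 'a) set \<Rightarrow> bool" where
  "lp_shattered p d V S \<longleftrightarrow> S \<subseteq> V \<times> V \<times> V \<and>
     (\<forall>lab :: 'a \<times> 'a \<times> 'a \<Rightarrow> bool. \<exists>f :: 'a \<Rightarrow> nat \<Rightarrow> real.
        \<forall>q\<in>S. satisfies_label (lp_dist p d f) q (lab q))"

definition lp_vc_dim :: "real \<Rightarrow> nat \<Rightarrow> 'a set \<Rightarrow> nat" where
  "lp_vc_dim p d V = Max {card S | S. lp_shattered p d V S}"

end

theory Submission
  imports Defs
begin

text \<open>Split V into k \<le> d anchors and P disjoint pairs, where k P is of order
  min(n^2, n d). Anchor i is embedded as the unit vector e_i and pair j as a sign vector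
  and its negative, \<plusminus>s_j \<in> {-1,1}^d. Every coordinate other than i contributes exactly 1
  to the p-th power of the l_p distance from e_i to s_j and to -s_j, so which of the two
  is closer is decided by the single coordinate s_j i. Choosing s_j i according to the
  label of the query (e_i, s_j, -s_j) realises any labeling of the k P queries.\<close>

lemma sum_powr_dist_unit_sign:
  fixes s :: "nat \<Rightarrow> real"
  assumes "i < d" and "\<And>l. \<bar>s l\<bar> = 1"
  shows "(\<Sum>l<d. \<bar>(if l = i then 1 else 0) - s l\<bar> powr p) = real d - 1 + \<bar>1 - s i\<bar> powr p"
proof -
  have "(\<Sum>l<d. \<bar>(if l = i then 1 else 0) - s l\<bar> powr p)
      = \<bar>1 - s i\<bar> powr p + (\<Sum>l\<in>{..<d} - {i}. \<bar>(if l = i then 1 else 0) - s l\<bar> powr p)"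
    using assms(1) by (subst sum.remove[of _ i]) auto
  also have "(\<Sum>l\<in>{..<d} - {i}. \<bar>(if l = i then 1 else 0) - s l\<bar> powr p) = (\<Sum>l\<in>{..<d} - {i}. 1)"
    using assms(2) by (intro sum.cong) auto
  also have "\<dots> = real d - 1"
    using assms(1) by simp
  finally show ?thesis by simp
qed

lemma satisfies_label_unit_sign:
  fixes s :: "nat \<Rightarrow> real"
  assumes "p > 0" and "i < d" and sign: "\<And>l. \<bar>s l\<bar> = 1"
    and "f x = (\<lambda>l. if l = i then 1 else 0)" and "f y = s" and "f z = (\<lambda>l. - s l)"
  shows "satisfies_label (lp_dist p d f) (x, y, z) (s i = 1)"
proof -
  have dist_y: "(\<Sum>l<d. \<bar>f x l - f y l\<bar> powr p) = real d - 1 + \<bar>1 - s i\<bar> powr p"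
    using assms sum_powr_dist_unit_sign[of i d s p] by simp
  have dist_z: "(\<Sum>l<d. \<bar>f x l - f z l\<bar> powr p) = real d - 1 + \<bar>1 + s i\<bar> powr p"
    using assms sum_powr_dist_unit_sign[of i d "\<lambda>l. - s l" p] by simp
  have "real d - 1 \<ge> 0" and "(2::real) powr p > 0" and "1 / p > 0"
    using assms(1,2) by auto
  moreover have "s i = 1 \<or> s i = -1"
    using sign[of i] by linarith
  ultimately show ?thesis
    unfolding satisfies_label_def lp_dist_def using dist_y dist_z
    by (auto intro!: powr_less_mono2)
qed

lemma lp_shattered_anchors_pairs:
  fixes V :: "'a set"
  assumes "finite V" and "p > 0" and "k \<le> d" and "k + 2 * P \<le> card V"
  shows "\<exists>S. lp_shattered p d V S \<and> card S = k * P"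
proof -
  obtain g where g_V: "g ` {..<k + 2 * P} \<subseteq> V" and g_inj: "inj_on g {..<k + 2 * P}"
    using card_le_inj[of "{..<k + 2 * P}" V] assms(1,4) by auto
  define q where "q i j = (g i, g (k + 2 * j), g (k + 2 * j + 1))" for i j
  define S where "S = case_prod q ` ({..<k} \<times> {..<P})"
  have "inj_on (case_prod q) ({..<k} \<times> {..<P})"
  proof (rule inj_onI, clarify)
    fix i j i' j' assume "i < k" "j < P" "i' < k" "j' < P" and "q i j = q i' j'"
    then have "g i = g i'" and "g (k + 2 * j) = g (k + 2 * j')"
      unfolding q_def by auto
    then show "i = i' \<and> j = j'"
      using g_inj \<open>i < k\<close> \<open>j < P\<close> \<open>i' < k\<close> \<open>j' < P\<close> by (auto dest: inj_onD)
  qed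
  then have card_S: "card S = k * P"
    unfolding S_def by (simp add: card_image card_cartesian_product)
  have S_V: "S \<subseteq> V \<times> V \<times> V"
    using g_V unfolding S_def q_def by fastforce
  have "\<exists>f. \<forall>q\<in>S. satisfies_label (lp_dist p d f) q (lab q)" for lab
  proof -
    define s where "s j l = (if lab (q l j) then 1 else - 1 :: real)" for j l
    define F where "F m = (if m < k then (\<lambda>l. if l = m then 1 else 0)
      else if even (m - k) then s ((m - k) div 2) else (\<lambda>l. - s ((m - k) div 2) l))" for m
    define f where "f = F \<circ> inv_into {..<k + 2 * P} g"
    have f_g: "m < k + 2 * P \<Longrightarrow> f (g m) = F m" for m
      unfolding f_def using g_inj by simp
    have "satisfies_label (lp_dist p d f) (q i j) (lab (q i j))" if "i < k" "j < P" for i j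
    proof -
      have "f (g i) = (\<lambda>l. if l = i then 1 else 0)"
        and "f (g (k + 2 * j)) = s j" and "f (g (k + 2 * j + 1)) = (\<lambda>l. - s j l)"
        using that by (simp_all add: f_g F_def)
      moreover have "\<bar>s j l\<bar> = 1" for l
        unfolding s_def by simp
      ultimately have "satisfies_label (lp_dist p d f) (q i j) (s j i = 1)"
        unfolding q_def using satisfies_label_unit_sign[of p i d "s j" f] assms(2,3) that by simp
      moreover have "(s j i = 1) = lab (q i j)"
        by (simp add: s_def)
      ultimately show ?thesis
        by simp
    qed
    then have "\<forall>q\<in>S. satisfies_label (lp_dist p d f) q (lab q)"
      unfolding S_def by auto
    then show ?thesis by blast
  qed
  then show ?thesis
    using S_V card_S unfolding lp_shattered_def by blast
qed

lemma card_le_lp_vc_dim: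
  fixes V :: "'a set"
  assumes "finite V" and "lp_shattered p d V S"
  shows "card S \<le> lp_vc_dim p d V"
proof -
  have "{card S | S. lp_shattered p d V S} \<subseteq> card ` Pow (V \<times> V \<times> V)"
    unfolding lp_shattered_def by auto
  then have "finite {card S | S. lp_shattered p d V S}"
    using assms(1) by (meson finite_Pow_iff finite_SigmaI finite_imageI finite_subset)
  then show ?thesis
    unfolding lp_vc_dim_def using assms(2) by (auto intro: Max_ge)
qed

lemma anchors_pairs_split:
  assumes "4 \<le> n"
  shows "\<exists>k P. k \<le> d \<and> k + 2 * P \<le> n \<and> min (real n ^ 2) (real n * real d) \<le> 32 * real (k * P)"
proof (intro exI conjI)
  define k where "k = min d (n div 2)"
  define P where "P = (n - k) div 2"
  show "k \<le> d" and "k + 2 * P \<le> n"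
    unfolding k_def P_def by auto
  have P_ge: "real n \<le> 8 * real P"
    unfolding P_def k_def using assms by linarith
  have k_ge: "min (real n) (4 * real d) \<le> 4 * real k"
    unfolding k_def using assms by linarith
  have "min (real n ^ 2) (real n * real d) = real n * min (real n) (real d)"
    by (simp add: min_mult_distrib_left power2_eq_square)
  also have "\<dots> \<le> (8 * real P) * (4 * real k)"
    using P_ge k_ge by (intro mult_mono) auto
  also have "\<dots> = 32 * real (k * P)"
    by simp
  finally show "min (real n ^ 2) (real n * real d) \<le> 32 * real (k * P)" .
qed

theorem mainTheorem4:
  "\<exists>c::real. c > 0 \<and> (\<exists>N::nat. \<forall>(V::'a set) (p::real) (d::nat).
      finite V \<longrightarrow> card V \<ge> N \<longrightarrow> p > 0 \<longrightarrow> d \<ge> 1 \<longrightarrow>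
      real (lp_vc_dim p d V) \<ge> c * min (real (card V) ^ 2) (real (card V) * real d))"
proof (intro exI conjI allI impI)
  show "(1 / 32 :: real) > 0" by simp
  fix V :: "'a set" and p :: real and d :: nat
  assume "finite V" and "4 \<le> card V" and "p > 0" and "1 \<le> d"
  obtain k P where "k \<le> d" and "k + 2 * P \<le> card V"
    and bound: "min (real (card V) ^ 2) (real (card V) * real d) \<le> 32 * real (k * P)"
    using anchors_pairs_split[OF \<open>4 \<le> card V\<close>] by blast
  then obtain S where "lp_shattered p d V S" and "card S = k * P"
    using lp_shattered_anchors_pairs \<open>finite V\<close> \<open>p > 0\<close> by blast
  then have "k * P \<le> lp_vc_dim p d V"
    using card_le_lp_vc_dim \<open>finite V\<close> by metis
  with bound show "1 / 32 * min (real (card V) ^ 2) (real (card V) * real d) \<le> real (lp_vc_dim p d V)"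
    by linarith
qed

end
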